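(* Let $P,Q$ be persistence diagrams satisfying the standing assumptions, and let $d_T^{per}(P,Q)$ be defined from the randomly shifted quadtree as in the context. Then there is an absolute constant $C'$ such that $$\mathbb{E}\big[d_T^{per}(P,Q)\big]\le C'\log\Delta\cdot d_W(P,Q),$$ the expectation being over the random shift.
   Context: A persistence diagram is a finite multiset of points in $\mathbb{R}^2$. Let $L=\{(x,x)\mid x\in\mathbb{R}\}$ be the diagonal and $\pi(p)=\big(\tfrac{p.x+p.y}{2},\tfrac{p.x+p.y}{2}\big)$. An augmented matching for finite multisets $A,B\subset\mathbb{R}^2$ is a subset $\Gamma\subset (A\cup\pi(B))\times(B\cup\pi(A))$ such that each element of $A$ and of $B$ (with multiplicity) appears in exactly one pair, and each pair $(a,b)$ is of the form (1) $a\in A,b\in B$, (2) $a\in A,b=\pi(a)$, or (3) $a=\pi(b),b\in B$. $d_W(P,Q)=\min_\Gamma\sum_{(p,q)\in\Gamma}\|p-q\|_2$ over augmented matchings for $P,Q$. Standing assumptions: with $X=P\uplus Q$, the minimum distance between distinct points of $X$ is $1$, the minimum distance from any point of $X$ to $L$ is $1$, $X\subseteq[0,\Delta]^2$ with $\Delta$ (the spread of $X$) a power of $2$. Randomly shifted quadtree: $H$ is $[-\Delta,\Delta]^2$ translated by a random vector with coordinates chosen uniformly in $[0,\Delta]$. For $i=-1,0,\dots,\log_2\Delta$, $G_i$ is the grid of cells of side $2^i$ obtained by repeatedly halving $H$ in each coordinate. A cell is terminal if it intersects $L$. With $P(c),Q(c)$ the number of points of $P$, $Q$ in cell $c$, $$d_T^{per}(P,Q)=\sum_{i=-1}^{\log_2\Delta}2^i\sum_{c\in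 G_i,\ c\text{ non-terminal}}|P(c)-Q(c)|.$$ *)

theory Defs
  imports "HOL-Analysis.Analysis" "HOL-Library.Multiset"
begin

type_synonym point = "real \<times> real"

definition diag :: "point set" where
  "diag = {(x, x) | x. True}"

definition proj :: "point \<Rightarrow> point" where
  "proj p = ((fst p + snd p) / 2, (fst p + snd p) / 2)"

text \<open>An augmented matching is encoded as a multiset of tagged pairs:
  (Some a, Some b) is a pair of type (1), (Some a, None) is the pair (a, proj a)
  of type (2), and (None, Some b) is the pair (proj b, b) of type (3).
  Every element of A and of B (with multiplicity) occurs in exactly one pair.\<close>
definition aug_matching ::
  "point multiset \<Rightarrow> point multiset \<Rightarrow> (point option \<times> point option) multiset \<Rightarrow> bool" where
  "aug_matching A B \<Gamma> \<longleftrightarrow>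
     (\<forall>g \<in># \<Gamma>. g \<noteq> (None, None)) \<and>
     image_mset the (filter_mset (\<lambda>g. g \<noteq> None) (image_mset fst \<Gamma>)) = A \<and>
     image_mset the (filter_mset (\<lambda>g. g \<noteq> None) (image_mset snd \<Gamma>)) = B"

fun pair_cost :: "point option \<times> point option \<Rightarrow> real" where
  "pair_cost (Some a, Some b) = dist a b"
| "pair_cost (Some a, None) = dist a (proj a)"
| "pair_cost (None, Some b) = dist (proj b) b"
| "pair_cost (None, None) = 0"

definition matching_cost :: "(point option \<times> point option) multiset \<Rightarrow> real" where
  "matching_cost \<Gamma> = (\<Sum>g \<in># \<Gamma>. pair_cost g)"

definition dW :: "point multiset \<Rightarrow> point multiset \<Rightarrow> real" where
  "dW P Q = Min {matching_cost \<Gamma> | \<Gamma>. aug_matching P Q \<Gamma>}"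

text \<open>Randomly shifted quadtree with Delta = 2^m and shift v.
  H = [-Delta, Delta]^2 + v.  The grid G_i (i = -1 .. m) consists of the
  cells of side 2^i, indexed by (k, l) with k, l < 2^(m+1-i); cells are taken
  half-open, [a, a + 2^i) x [b, b + 2^i).\<close>
definition side :: "int \<Rightarrow> real" where
  "side i = (2::real) powi i"

definition ncells :: "nat \<Rightarrow> int \<Rightarrow> nat" where
  "ncells m i = 2 ^ nat (int m + 1 - i)"

definition cell :: "nat \<Rightarrow> point \<Rightarrow> int \<Rightarrow> nat \<Rightarrow> nat \<Rightarrow> point set" where
  "cell m v i k l =
     {p. fst v - 2^m + real k * side i \<le> fst p \<and> fst p < fst v - 2^m + real (k + 1) * side i \<and>
         snd v - 2^m + real l * side i \<le> snd p \<and> snd p < snd v - 2^m + real (l + 1) * side i}"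

definition terminal :: "point set \<Rightarrow> bool" where
  "terminal c \<longleftrightarrow> c \<inter> diag \<noteq> {}"

definition cnt :: "point multiset \<Rightarrow> point set \<Rightarrow> nat" where
  "cnt P c = size (filter_mset (\<lambda>p. p \<in> c) P)"

definition dT_per :: "nat \<Rightarrow> point \<Rightarrow> point multiset \<Rightarrow> point multiset \<Rightarrow> real" where
  "dT_per m v P Q =
     (\<Sum>i \<in> {-1..int m}. side i *
        (\<Sum>(k, l) \<in> {..<ncells m i} \<times> {..<ncells m i}.
           if terminal (cell m v i k l) then 0
           else \<bar>real (cnt P (cell m v i k l)) - real (cnt Q (cell m v i k l))\<bar>))"

definition standing_assms :: "point multiset \<Rightarrow> point multiset \<Rightarrow> real \<Rightarrow> bool" where
  "standing_assms P Q \<Delta> \<longleftrightarrow>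
     (let X = P + Q in
       (\<forall>p \<in># X. \<forall>q \<in># X. p \<noteq> q \<longrightarrow> dist p q \<ge> 1) \<and>
       ((\<exists>p \<in># X. \<exists>q \<in># X. p \<noteq> q) \<longrightarrow> (\<exists>p \<in># X. \<exists>q \<in># X. p \<noteq> q \<and> dist p q = 1)) \<and>
       (\<forall>p \<in># X. infdist p diag \<ge> 1) \<and>
       (X \<noteq> {#} \<longrightarrow> (\<exists>p \<in># X. infdist p diag = 1)) \<and>
       (\<forall>p \<in># X. 0 \<le> fst p \<and> fst p \<le> \<Delta> \<and> 0 \<le> snd p \<and> snd p \<le> \<Delta>))"

end

theory Submission
  imports Defs
begin

text \<open>
  Fix an optimal augmented matching. In a non-terminal cell c the difference P(c) - Q(c) is
  the signed number of matched pairs with exactly one end point in c, since projections onto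
  the diagonal only lie in terminal cells. A pair contributes at most 2 to level i, and only
  if a vertical or horizontal grid line of level i separates its end points. Over the random
  shift the number of such lines has expectation |dx| / 2^i resp. |dy| / 2^i, so each of the
  log Delta + 2 levels adds at most 2 (|dx| + |dy|) <= 4 |p - q| per pair to the expectation.
  For Delta = 1 the standing assumptions leave no points at all.
\<close>

lemma sum_mset_subtractf:
  fixes f g :: "'a \<Rightarrow> 'b::ab_group_add"
  shows "(\<Sum>x\<in>#M. f x - g x) = (\<Sum>x\<in>#M. f x) - (\<Sum>x\<in>#M. g x)"
  by (induction M) auto

lemma sum_mset_abs:
  fixes f :: "'a \<Rightarrow> 'b::ordered_ab_group_add_abs"
  shows "\<bar>\<Sum>x\<in>#M. f x\<bar> \<le> (\<Sum>x\<in>#M. \<bar>f x\<bar>)"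
  by (induction M) (auto intro: order.trans[OF abs_triangle_ineq] add_left_mono)

lemma sum_mset_nonneg:
  fixes f :: "'a \<Rightarrow> 'b::ordered_comm_monoid_add"
  shows "(\<And>x. x \<in># M \<Longrightarrow> 0 \<le> f x) \<Longrightarrow> 0 \<le> (\<Sum>x\<in>#M. f x)"
  by (induction M) auto

lemma sum_sum_mset_swap:
  "(\<Sum>x\<in>A. \<Sum>y\<in>#M. f x y) = (\<Sum>y\<in>#M. \<Sum>x\<in>A. f x y)"
  by (induction M) (auto simp: sum.distrib)

lemma integrable_sum_mset:
  fixes f :: "'a \<Rightarrow> 'b \<Rightarrow> 'c::{banach, second_countable_topology}"
  shows "(\<And>x. x \<in># A \<Longrightarrow> integrable M (f x)) \<Longrightarrow> integrable M (\<lambda>y. \<Sum>x\<in>#A. f x y)"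
  by (induction A) auto

lemma integral_sum_mset:
  fixes f :: "'a \<Rightarrow> 'b \<Rightarrow> 'c::{banach, second_countable_topology}"
  shows "(\<And>x. x \<in># A \<Longrightarrow> integrable M (f x)) \<Longrightarrow>
    integral\<^sup>L M (\<lambda>y. \<Sum>x\<in>#A. f x y) = (\<Sum>x\<in>#A. integral\<^sup>L M (f x))"
  by (induction A) (auto simp: integrable_sum_mset)

section \<open>Integrals of floor functions\<close>

lemma has_integral_floor_period:
  fixes s c \<alpha> :: real
  assumes s: "s > 0"
  shows "((\<lambda>w. real_of_int \<lfloor>(c - w) / s\<rfloor>) has_integral (c - \<alpha> - s)) {\<alpha>..\<alpha> + s}"
proof -
  define K where "K = \<lfloor>(c - \<alpha>) / s\<rfloor>"
  define w\<^sub>0 where "w\<^sub>0 = c - real_of_int K * s"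
  have K1: "real_of_int K \<le> (c - \<alpha>) / s" and K2: "(c - \<alpha>) / s < real_of_int K + 1"
    unfolding K_def by linarith+
  have "real_of_int K * s \<le> c - \<alpha>" using K1 s by (simp add: pos_le_divide_eq)
  hence w\<^sub>0_ge: "\<alpha> \<le> w\<^sub>0" unfolding w\<^sub>0_def by linarith
  have "c - \<alpha> < (real_of_int K + 1) * s" using K2 s by (simp add: pos_divide_less_eq)
  hence w\<^sub>0_le: "w\<^sub>0 \<le> \<alpha> + s" unfolding w\<^sub>0_def by (simp add: algebra_simps)
  have left: "((\<lambda>w. real_of_int \<lfloor>(c - w) / s\<rfloor>) has_integral (real_of_int K * (w\<^sub>0 - \<alpha>))) {\<alpha>..w\<^sub>0}"
  proof (rule has_integral_eq[rotated])
    show "((\<lambda>w. real_of_int K) has_integral (real_of_int K * (w\<^sub>0 - \<alpha>))) {\<alpha>..w\<^sub>0}"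
      using has_integral_const_real[of "real_of_int K" \<alpha> w\<^sub>0] w\<^sub>0_ge by (simp add: mult.commute)
  next
    fix x assume "x \<in> {\<alpha>..w\<^sub>0}"
    hence "real_of_int K * s \<le> c - x" "c - x \<le> c - \<alpha>" unfolding w\<^sub>0_def by auto
    hence "real_of_int K \<le> (c - x) / s" "(c - x) / s \<le> (c - \<alpha>) / s"
      using s by (simp_all add: pos_le_divide_eq divide_right_mono)
    hence "\<lfloor>(c - x) / s\<rfloor> = K" using K2 by (simp add: floor_eq_iff)
    thus "real_of_int K = real_of_int \<lfloor>(c - x) / s\<rfloor>" by simp
  qed
  have right: "((\<lambda>w. real_of_int \<lfloor>(c - w) / s\<rfloor>) has_integral ((real_of_int K - 1) * (\<alpha> + s - w\<^sub>0))) {w\<^sub>0..\<alpha> + s}"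
  proof (rule has_integral_spike_finite[of "{w\<^sub>0}"])
    show "((\<lambda>w. real_of_int K - 1) has_integral ((real_of_int K - 1) * (\<alpha> + s - w\<^sub>0))) {w\<^sub>0..\<alpha> + s}"
      using has_integral_const_real[of "real_of_int K - 1" w\<^sub>0 "\<alpha> + s"] w\<^sub>0_le by (simp add: mult.commute)
  next
    fix x assume "x \<in> {w\<^sub>0..\<alpha> + s} - {w\<^sub>0}"
    hence "c - x < real_of_int K * s" "c - \<alpha> - s \<le> c - x" unfolding w\<^sub>0_def by auto
    hence "(c - x) / s < real_of_int K" "(c - \<alpha> - s) / s \<le> (c - x) / s"
      using s by (simp_all add: pos_divide_less_eq divide_right_mono)
    moreover have "(c - \<alpha> - s) / s = (c - \<alpha>) / s - 1"
      using s by (simp add: diff_divide_distrib)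
    ultimately have "\<lfloor>(c - x) / s\<rfloor> = K - 1" using K1 by (simp add: floor_eq_iff)
    thus "real_of_int \<lfloor>(c - x) / s\<rfloor> = real_of_int K - 1" by simp
  qed simp
  have "real_of_int K * (w\<^sub>0 - \<alpha>) + (real_of_int K - 1) * (\<alpha> + s - w\<^sub>0) = c - \<alpha> - s"
    unfolding w\<^sub>0_def by (simp add: algebra_simps)
  with has_integral_combine[OF w\<^sub>0_ge w\<^sub>0_le left right] show ?thesis by simp
qed

lemma has_integral_floor_periods:
  fixes s c :: real
  assumes s: "s > 0"
  shows "((\<lambda>w. real_of_int \<lfloor>(c - w) / s\<rfloor>) has_integral (\<Sum>j<N. c - real j * s - s)) {0..real N * s}"
proof (induction N)
  case 0
  show ?case using has_integral_refl(2)[of _ 0] by simp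
next
  case (Suc N)
  have "((\<lambda>w. real_of_int \<lfloor>(c - w) / s\<rfloor>) has_integral ((\<Sum>j<N. c - real j * s - s) + (c - real N * s - s)))
      {0..real N * s + s}"
    using has_integral_combine[OF _ _ Suc.IH has_integral_floor_period[OF s]] s by simp
  then show ?case by (simp add: algebra_simps)
qed

lemma nn_integral_floor_diff:
  fixes a b s :: real
  assumes s: "s > 0"
  shows "(\<integral>\<^sup>+x. ennreal \<bar>real_of_int \<lfloor>(b - x) / s\<rfloor> - real_of_int \<lfloor>(a - x) / s\<rfloor>\<bar> * indicator {0..real N * s} x \<partial>lborel)
    = ennreal (real N * \<bar>b - a\<bar>)"
proof -
  have main: "(\<integral>\<^sup>+x. ennreal \<bar>real_of_int \<lfloor>(b - x) / s\<rfloor> - real_of_int \<lfloor>(a - x) / s\<rfloor>\<bar> * indicator {0..real N * s} x \<partial>lborel)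
    = ennreal (real N * \<bar>b - a\<bar>)" if le: "a \<le> b" for a b
  proof -
    have mono: "\<lfloor>(a - x) / s\<rfloor> \<le> \<lfloor>(b - x) / s\<rfloor>" for x
      using s le by (intro floor_mono divide_right_mono) auto
    define f where "f x = (if x \<in> {0..real N * s} then real_of_int \<lfloor>(b - x) / s\<rfloor> - real_of_int \<lfloor>(a - x) / s\<rfloor> else 0)" for x
    have "((\<lambda>x. real_of_int \<lfloor>(b - x) / s\<rfloor> - real_of_int \<lfloor>(a - x) / s\<rfloor>) has_integral
        ((\<Sum>j<N. b - real j * s - s) - (\<Sum>j<N. a - real j * s - s))) {0..real N * s}"
      by (intro has_integral_diff has_integral_floor_periods s)
    also have "(\<Sum>j<N. b - real j * s - s) - (\<Sum>j<N. a - real j * s - s) = real N * (b - a)"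
      by (simp add: sum_subtractf[symmetric] algebra_simps)
    finally have "(f has_integral (real N * (b - a))) UNIV"
      unfolding f_def has_integral_restrict_UNIV .
    moreover have "f \<in> borel_measurable borel" unfolding f_def by measurable
    moreover have "0 \<le> f x" for x by (simp add: f_def mono)
    ultimately have "integral\<^sup>N lborel f = ennreal (real N * (b - a))"
      by (intro nn_integral_has_integral_lborel)
    moreover have "integral\<^sup>N lborel f =
        (\<integral>\<^sup>+x. ennreal \<bar>real_of_int \<lfloor>(b - x) / s\<rfloor> - real_of_int \<lfloor>(a - x) / s\<rfloor>\<bar> * indicator {0..real N * s} x \<partial>lborel)"
      by (intro nn_integral_cong) (auto simp: f_def indicator_def mono)
    ultimately show ?thesis using le by simp
  qed
  show ?thesis
    using main[of a b] main[of b a] by (cases "a \<le> b") (auto simp: abs_minus_commute)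
qed

lemma nn_integral_lborel_fst_snd:
  fixes f g :: "real \<Rightarrow> ennreal"
  assumes [measurable]: "f \<in> borel_measurable borel" "g \<in> borel_measurable borel"
  shows "(\<integral>\<^sup>+v. f (fst v) * g (snd v) \<partial>lborel) = (\<integral>\<^sup>+x. f x \<partial>lborel) * (\<integral>\<^sup>+y. g y \<partial>lborel)"
proof -
  have "(\<integral>\<^sup>+v. f (fst v) * g (snd v) \<partial>lborel) = (\<integral>\<^sup>+x. \<integral>\<^sup>+y. f x * g y \<partial>lborel \<partial>lborel)"
    unfolding lborel_prod[symmetric] by (subst lborel.nn_integral_fst[symmetric]) auto
  also have "\<dots> = (\<integral>\<^sup>+x. f x * (\<integral>\<^sup>+y. g y \<partial>lborel) \<partial>lborel)"
    by (simp add: nn_integral_cmult)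
  finally show ?thesis by (simp add: nn_integral_multc)
qed

lemma nn_integral_square_coordinate:
  fixes \<phi> :: "real \<Rightarrow> ennreal" and \<pi> :: "point \<Rightarrow> real"
  assumes [measurable]: "\<phi> \<in> borel_measurable borel" and D: "D \<ge> 0" and \<pi>: "\<pi> = fst \<or> \<pi> = snd"
  shows "(\<integral>\<^sup>+v. \<phi> (\<pi> v) * indicator (cbox (0, 0) (D, D)) v \<partial>lborel)
    = (\<integral>\<^sup>+x. \<phi> x * indicator {0..D} x \<partial>lborel) * ennreal D"
proof -
  have "indicator (cbox (0, 0) (D, D)) v = indicator {0..D} (fst v) * (indicator {0..D} (snd v) :: ennreal)" for v
    by (simp add: cbox_Pair_eq indicator_times)
  with \<pi> D show ?thesis
    using nn_integral_lborel_fst_snd[of "\<lambda>x. \<phi> x * indicator {0..D} x" "indicator {0..D}"]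
      nn_integral_lborel_fst_snd[of "indicator {0..D}" "\<lambda>x. \<phi> x * indicator {0..D} x"]
    by (auto simp: mult_ac nn_integral_indicator)
qed

lemma emeasure_lborel_square: "D \<ge> 0 \<Longrightarrow> emeasure lborel (cbox (0::real, 0::real) (D, D)) = ennreal (D * D)"
  using nn_integral_square_coordinate[of "\<lambda>_. 1" D fst]
  by (simp add: ennreal_mult nn_integral_indicator)

lemma
  fixes a b s :: real and \<pi> :: "point \<Rightarrow> real"
  assumes s: "s > 0" and N: "N > 0" and \<pi>: "\<pi> = fst \<or> \<pi> = snd"
  shows integrable_uniform_square_floor_diff:
      "integrable (uniform_measure lborel (cbox (0, 0) (real N * s, real N * s)))
         (\<lambda>v. \<bar>real_of_int \<lfloor>(b - \<pi> v) / s\<rfloor> - real_of_int \<lfloor>(a - \<pi> v) / s\<rfloor>\<bar>)"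
    and integral_uniform_square_floor_diff:
      "integral\<^sup>L (uniform_measure lborel (cbox (0, 0) (real N * s, real N * s)))
         (\<lambda>v. \<bar>real_of_int \<lfloor>(b - \<pi> v) / s\<rfloor> - real_of_int \<lfloor>(a - \<pi> v) / s\<rfloor>\<bar>) = \<bar>b - a\<bar> / s"
proof -
  define D where "D = real N * s"
  define \<phi> where "\<phi> x = \<bar>real_of_int \<lfloor>(b - x) / s\<rfloor> - real_of_int \<lfloor>(a - x) / s\<rfloor>\<bar>" for x
  let ?M = "uniform_measure lborel (cbox (0::real, 0::real) (D, D))"
  have D: "D > 0" using s N by (simp add: D_def)
  have [measurable]: "\<phi> \<in> borel_measurable borel" unfolding \<phi>_def by measurable
  have [measurable]: "\<pi> \<in> borel_measurable borel"
    using \<pi> by (auto intro!: borel_measurable_continuous_onI continuous_intros)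
  have "(\<integral>\<^sup>+v. ennreal (\<phi> (\<pi> v)) \<partial>?M)
      = (\<integral>\<^sup>+x. ennreal (\<phi> x) * indicator {0..D} x \<partial>lborel) * ennreal D / ennreal (D * D)"
    using D nn_integral_square_coordinate[of "\<lambda>x. ennreal (\<phi> x)" D \<pi>] \<pi>
    by (subst nn_integral_uniform_measure) (auto simp: emeasure_lborel_square)
  also have "\<dots> = ennreal (\<bar>b - a\<bar> / s)"
    using nn_integral_floor_diff[OF s, of b a N] D s N
    by (simp add: \<phi>_def divide_ennreal ennreal_mult[symmetric] D_def)
  finally have nn: "(\<integral>\<^sup>+v. ennreal (\<phi> (\<pi> v)) \<partial>?M) = ennreal (\<bar>b - a\<bar> / s)" .
  have nonneg: "AE v in ?M. 0 \<le> \<phi> (\<pi> v)" by (simp add: \<phi>_def)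
  moreover from nonneg have "integrable ?M (\<lambda>v. \<phi> (\<pi> v))"
    by (intro integrableI_nonneg) (simp_all add: nn)
  moreover have "integral\<^sup>L ?M (\<lambda>v. \<phi> (\<pi> v)) = \<bar>b - a\<bar> / s"
    using s nonneg by (subst integral_eq_nn_integral) (simp_all add: nn)
  ultimately show "integrable ?M (\<lambda>v. \<phi> (\<pi> v))" "integral\<^sup>L ?M (\<lambda>v. \<phi> (\<pi> v)) = \<bar>b - a\<bar> / s"
    by (simp_all add: \<phi>_def D_def)
qed

section \<open>Cells of the shifted quadtree\<close>

definition cell_index :: "nat \<Rightarrow> point \<Rightarrow> int \<Rightarrow> point \<Rightarrow> int \<times> int" where
  "cell_index m v i p = (\<lfloor>(fst p + 2 ^ m - fst v) / side i\<rfloor>, \<lfloor>(snd p + 2 ^ m - snd v) / side i\<rfloor>)"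

definition cell_dist :: "nat \<Rightarrow> point \<Rightarrow> int \<Rightarrow> point \<Rightarrow> point \<Rightarrow> int" where
  "cell_dist m v i p q =
     \<bar>fst (cell_index m v i p) - fst (cell_index m v i q)\<bar> +
     \<bar>snd (cell_index m v i p) - snd (cell_index m v i q)\<bar>"

lemma side_pos: "side i > 0"
  by (simp add: side_def)

lemma mem_cell_iff: "p \<in> cell m v i k l \<longleftrightarrow> cell_index m v i p = (int k, int l)"
  using side_pos[of i]
  by (auto simp: cell_def cell_index_def floor_eq_iff pos_le_divide_eq pos_divide_less_eq algebra_simps)

lemma sum_cells_mem_le_1:
  "(\<Sum>(k, l)\<in>{..<n} \<times> {..<n}. of_bool (p \<in> cell m v i k l) :: real) \<le> 1"
proof -
  let ?C = "{x \<in> {..<n} \<times> {..<n}. p \<in> cell m v i (fst x) (snd x)}"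
  have "?C \<subseteq> {(nat (fst (cell_index m v i p)), nat (snd (cell_index m v i p)))}"
    by (auto simp: mem_cell_iff)
  hence "card ?C \<le> 1" using card_mono[of "{_}"] by fastforce
  moreover have "(\<Sum>(k, l)\<in>{..<n} \<times> {..<n}. of_bool (p \<in> cell m v i k l) :: real) = real (card ?C)"
    by (simp add: case_prod_beta sum_of_bool_eq Int_def)
  ultimately show ?thesis by simp
qed

lemma sum_cells_separating_le:
  "(\<Sum>(k, l)\<in>{..<n} \<times> {..<n}. \<bar>of_bool (p \<in> cell m v i k l) - of_bool (q \<in> cell m v i k l)\<bar> :: real)
     \<le> 2 * of_int (cell_dist m v i p q)"
proof (cases "cell_index m v i p = cell_index m v i q")
  case True
  then show ?thesis by (simp add: mem_cell_iff cell_dist_def)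
next
  case False
  hence separated: "1 \<le> cell_dist m v i p q"
    by (auto simp: cell_dist_def prod_eq_iff)
  have "(\<Sum>(k, l)\<in>{..<n} \<times> {..<n}. \<bar>of_bool (p \<in> cell m v i k l) - of_bool (q \<in> cell m v i k l)\<bar> :: real)
      \<le> (\<Sum>(k, l)\<in>{..<n} \<times> {..<n}. of_bool (p \<in> cell m v i k l) + of_bool (q \<in> cell m v i k l))"
    by (intro sum_mono) auto
  also have "\<dots> = (\<Sum>(k, l)\<in>{..<n} \<times> {..<n}. of_bool (p \<in> cell m v i k l) :: real) +
      (\<Sum>(k, l)\<in>{..<n} \<times> {..<n}. of_bool (q \<in> cell m v i k l))"
    by (simp add: sum.distrib split_def)
  also have "\<dots> \<le> 2"
    using sum_cells_mem_le_1[where p = p and n = n and m = m and v = v and i = i]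
      sum_cells_mem_le_1[where p = q and n = n and m = m and v = v and i = i] by linarith
  also have "2 \<le> 2 * real_of_int (cell_dist m v i p q)"
    using separated by simp
  finally show ?thesis .
qed

lemma power_nat_mult_side: "i \<le> int m \<Longrightarrow> 2 ^ nat (int m - i) * side i = 2 ^ m"
  by (simp add: side_def flip: power_int_of_nat power_int_add)

abbreviation shift_measure :: "nat \<Rightarrow> point measure" where
  "shift_measure m \<equiv> uniform_measure lborel (cbox (0, 0) (2 ^ m, 2 ^ m))"

lemma
  assumes i: "i \<le> int m"
  shows integrable_cell_dist: "integrable (shift_measure m) (\<lambda>v. side i * cell_dist m v i p q)"
    and integral_cell_dist:
      "integral\<^sup>L (shift_measure m) (\<lambda>v. side i * cell_dist m v i p q) = \<bar>fst p - fst q\<bar> + \<bar>snd p - snd q\<bar>"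
proof -
  define N :: nat where "N = 2 ^ nat (int m - i)"
  have N: "N > 0" and D: "2 ^ m = real N * side i"
    using power_nat_mult_side[OF i] by (simp_all add: N_def)
  have M: "shift_measure m = uniform_measure lborel (cbox (0, 0) (real N * side i, real N * side i))"
    by (simp only: D)
  note integrable_x = integrable_uniform_square_floor_diff[OF side_pos[of i] N,
      where \<pi> = fst and b = "fst p + 2 ^ m" and a = "fst q + 2 ^ m"]
  note integrable_y = integrable_uniform_square_floor_diff[OF side_pos[of i] N,
      where \<pi> = snd and b = "snd p + 2 ^ m" and a = "snd q + 2 ^ m"]
  note integral_x = integral_uniform_square_floor_diff[OF side_pos[of i] N,
      where \<pi> = fst and b = "fst p + 2 ^ m" and a = "fst q + 2 ^ m"]
  note integral_y = integral_uniform_square_floor_diff[OF side_pos[of i] N,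
      where \<pi> = snd and b = "snd p + 2 ^ m" and a = "snd q + 2 ^ m"]
  have cell_dist: "real_of_int (cell_dist m v i p q) =
      \<bar>real_of_int \<lfloor>(fst p + 2 ^ m - fst v) / side i\<rfloor> - real_of_int \<lfloor>(fst q + 2 ^ m - fst v) / side i\<rfloor>\<bar> +
      \<bar>real_of_int \<lfloor>(snd p + 2 ^ m - snd v) / side i\<rfloor> - real_of_int \<lfloor>(snd q + 2 ^ m - snd v) / side i\<rfloor>\<bar>" for v
    by (simp add: cell_dist_def cell_index_def)
  show "integrable (shift_measure m) (\<lambda>v. side i * cell_dist m v i p q)"
    unfolding cell_dist M using integrable_x integrable_y by simp
  show "integral\<^sup>L (shift_measure m) (\<lambda>v. side i * cell_dist m v i p q) = \<bar>fst p - fst q\<bar> + \<bar>snd p - snd q\<bar>"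
    unfolding cell_dist M using integrable_x integrable_y integral_x integral_y side_pos[of i]
    by (simp add: field_simps)
qed

fun left_point :: "point option \<times> point option \<Rightarrow> point" where
  "left_point (Some a, _) = a"
| "left_point (None, Some b) = proj b"
| "left_point (None, None) = undefined"

fun right_point :: "point option \<times> point option \<Rightarrow> point" where
  "right_point (_, Some b) = b"
| "right_point (Some a, None) = proj a"
| "right_point (None, None) = undefined"

lemma proj_in_diag: "proj p \<in> diag"
  unfolding diag_def proj_def by blast

lemma pair_cost_eq_dist: "g \<noteq> (None, None) \<Longrightarrow> pair_cost g = dist (left_point g) (right_point g)"
  by (cases g; cases "fst g"; cases "snd g") auto

lemma abs_diff_fst_add_abs_diff_snd_le: "\<bar>fst p - fst q\<bar> + \<bar>snd p - snd q\<bar> \<le> 2 * dist p (q :: point)"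
  using dist_fst_le[of p q] dist_snd_le[of p q] by (simp add: dist_real_def)

lemma aug_matching_pair_ne: "aug_matching P Q \<Gamma> \<Longrightarrow> g \<in># \<Gamma> \<Longrightarrow> g \<noteq> (None, None)"
  by (auto simp: aug_matching_def)

lemma of_nat_size_filter_the:
  "real (size (filter_mset (\<lambda>p. p \<in> c) (image_mset the (filter_mset (\<lambda>x. x \<noteq> None) (image_mset h \<Gamma>)))))
     = (\<Sum>g\<in>#\<Gamma>. of_bool (h g \<in> Some ` c))"
  by (induction \<Gamma>) auto

lemma cnt_diff_eq_sum_mset:
  assumes \<Gamma>: "aug_matching P Q \<Gamma>" and c: "\<not> terminal c"
  shows "real (cnt P c) - real (cnt Q c) = (\<Sum>g\<in>#\<Gamma>. of_bool (left_point g \<in> c) - of_bool (right_point g \<in> c))"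
proof -
  have "real (cnt P c) = (\<Sum>g\<in>#\<Gamma>. of_bool (fst g \<in> Some ` c))"
    "real (cnt Q c) = (\<Sum>g\<in>#\<Gamma>. of_bool (snd g \<in> Some ` c))"
    using \<Gamma> of_nat_size_filter_the[of c fst \<Gamma>] of_nat_size_filter_the[of c snd \<Gamma>]
    by (auto simp: aug_matching_def cnt_def)
  moreover have "(fst g \<in> Some ` c \<longleftrightarrow> left_point g \<in> c) \<and> (snd g \<in> Some ` c \<longleftrightarrow> right_point g \<in> c)"
    if "g \<in># \<Gamma>" for g
    \<comment> \<open>a pair with a diagonal end point has that end point in a terminal cell only\<close>
    using c aug_matching_pair_ne[OF \<Gamma> that] proj_in_diag
    by (cases g; cases "fst g"; cases "snd g") (auto simp: terminal_def)
  ultimately show ?thesis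
    by (simp add: sum_mset_subtractf cong: image_mset_cong)
qed

lemma set_mset_the_filter_ne_None:
  "set_mset (image_mset the (filter_mset (\<lambda>x. x \<noteq> None) M)) = {a. Some a \<in># M}"
  by force

lemma aug_matching_set_mset:
  assumes "aug_matching P Q \<Gamma>"
  shows "set_mset \<Gamma> \<subseteq> insert None (Some ` set_mset P) \<times> insert None (Some ` set_mset Q)"
proof
  fix g assume g: "g \<in># \<Gamma>"
  have P: "Some a \<in># image_mset fst \<Gamma> \<Longrightarrow> a \<in># P" and Q: "Some b \<in># image_mset snd \<Gamma> \<Longrightarrow> b \<in># Q" for a b
    using assms set_mset_the_filter_ne_None[of "image_mset fst \<Gamma>"] set_mset_the_filter_ne_None[of "image_mset snd \<Gamma>"]
    unfolding aug_matching_def by blast+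
  have "fst g \<in> insert None (Some ` set_mset P)"
    using g P by (cases "fst g") force+
  moreover have "snd g \<in> insert None (Some ` set_mset Q)"
    using g Q by (cases "snd g") force+
  ultimately show "g \<in> insert None (Some ` set_mset P) \<times> insert None (Some ` set_mset Q)"
    using mem_Times_iff by blast
qed

lemma aug_matching_size_le:
  assumes "aug_matching P Q \<Gamma>"
  shows "size \<Gamma> \<le> size P + size Q"
proof -
  have "size \<Gamma> \<le> size (filter_mset (\<lambda>x. x \<noteq> None) (image_mset fst \<Gamma>)) +
      size (filter_mset (\<lambda>x. x \<noteq> None) (image_mset snd \<Gamma>))"
    if "\<And>g. g \<in># \<Gamma> \<Longrightarrow> g \<noteq> (None, None)" for \<Gamma> :: "(point option \<times> point option) multiset"
    using that
  proof (induction \<Gamma>)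
    case (add g \<Gamma>)
    then have "g \<noteq> (None, None)" "size \<Gamma> \<le> size (filter_mset (\<lambda>x. x \<noteq> None) (image_mset fst \<Gamma>)) +
      size (filter_mset (\<lambda>x. x \<noteq> None) (image_mset snd \<Gamma>))" by simp_all
    then show ?case by (cases g) (simp del: not_None_eq)
  qed simp
  with assms show ?thesis
    unfolding aug_matching_def by (metis size_image_mset)
qed

lemma aug_matching_to_diag:
  "aug_matching P Q (image_mset (\<lambda>a. (Some a, None)) P + image_mset (\<lambda>b. (None, Some b)) Q)"
  by (simp add: aug_matching_def multiset.map_comp comp_def filter_mset_image_mset) blast

lemma finite_aug_matchings: "finite {\<Gamma>. aug_matching P Q \<Gamma>}"
proof -
  define S where "S = insert None (Some ` set_mset P) \<times> insert None (Some ` set_mset Q)"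
  have "{\<Gamma>. aug_matching P Q \<Gamma>} \<subseteq> (\<Union>n\<le>size P + size Q. multisets_of_size S n)"
    using aug_matching_set_mset aug_matching_size_le by (auto simp: multisets_of_size_def S_def)
  moreover have "finite (\<Union>n\<le>size P + size Q. multisets_of_size S n)"
    by (auto simp: S_def)
  ultimately show ?thesis by (rule finite_subset)
qed

lemma dW_attained:
  obtains \<Gamma> where "aug_matching P Q \<Gamma>" "dW P Q = matching_cost \<Gamma>"
proof -
  have "{matching_cost \<Gamma> | \<Gamma>. aug_matching P Q \<Gamma>} = matching_cost ` {\<Gamma>. aug_matching P Q \<Gamma>}"
    by blast
  moreover have "finite (matching_cost ` {\<Gamma>. aug_matching P Q \<Gamma>})"
    using finite_aug_matchings by blast
  moreover have "matching_cost ` {\<Gamma>. aug_matching P Q \<Gamma>} \<noteq> {}"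
    using aug_matching_to_diag by blast
  ultimately have "dW P Q \<in> matching_cost ` {\<Gamma>. aug_matching P Q \<Gamma>}"
    unfolding dW_def by (simp add: Min_in)
  with that show ?thesis by blast
qed

lemma matching_cost_nonneg: "0 \<le> matching_cost \<Gamma>"
proof -
  have "0 \<le> pair_cost g" for g by (cases g rule: pair_cost.cases) auto
  thus ?thesis unfolding matching_cost_def by (intro sum_mset_nonneg)
qed

lemma standing_assms_unit_square_empty:
  assumes "standing_assms P Q 1"
  shows "P = {#}" "Q = {#}"
proof -
  have "\<not> p \<in># P + Q" for p
  proof
    assume p: "p \<in># P + Q"
    obtain x y where p_eq: "p = (x, y)" by (cases p)
    have "\<bar>x - y\<bar> \<le> 1" and far: "1 \<le> infdist p diag"
      using assms p unfolding standing_assms_def Let_def p_eq by fastforce+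
    have "infdist p diag \<le> dist p (proj p)" by (rule infdist_le[OF proj_in_diag])
    also have "dist p (proj p) = sqrt ((x - y)\<^sup>2 / 2)"
      by (simp add: p_eq proj_def dist_Pair_Pair dist_real_def power2_eq_square field_simps)
    also have "\<dots> < 1"
      using \<open>\<bar>x - y\<bar> \<le> 1\<close> abs_square_le_1[of "x - y"] by simp
    finally show False using far by simp
  qed
  thus "P = {#}" "Q = {#}" by (auto simp flip: set_mset_eq_empty_iff)
qed

section \<open>The quadtree distance against a matching\<close>

lemma cells_level_le:
  assumes \<Gamma>: "aug_matching P Q \<Gamma>"
  shows "(\<Sum>(k, l)\<in>{..<n} \<times> {..<n}. if terminal (cell m v i k l) then 0
           else \<bar>real (cnt P (cell m v i k l)) - real (cnt Q (cell m v i k l))\<bar>)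
    \<le> (\<Sum>g\<in>#\<Gamma>. 2 * of_int (cell_dist m v i (left_point g) (right_point g)))"
proof -
  have "(\<Sum>(k, l)\<in>{..<n} \<times> {..<n}. if terminal (cell m v i k l) then 0
           else \<bar>real (cnt P (cell m v i k l)) - real (cnt Q (cell m v i k l))\<bar>)
    \<le> (\<Sum>(k, l)\<in>{..<n} \<times> {..<n}. \<Sum>g\<in>#\<Gamma>.
          \<bar>of_bool (left_point g \<in> cell m v i k l) - of_bool (right_point g \<in> cell m v i k l)\<bar>)"
    by (intro sum_mono)
      (auto simp: cnt_diff_eq_sum_mset[OF \<Gamma>] sum_mset_abs intro!: sum_mset_nonneg)
  also have "\<dots> = (\<Sum>g\<in>#\<Gamma>. \<Sum>(k, l)\<in>{..<n} \<times> {..<n}.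
          \<bar>of_bool (left_point g \<in> cell m v i k l) - of_bool (right_point g \<in> cell m v i k l)\<bar>)"
    by (simp add: split_def sum_sum_mset_swap)
  also have "\<dots> \<le> (\<Sum>g\<in>#\<Gamma>. 2 * of_int (cell_dist m v i (left_point g) (right_point g)))"
    by (intro sum_mset_mono sum_cells_separating_le)
  finally show ?thesis .
qed

lemma dT_per_le_sum_cell_dist:
  assumes "aug_matching P Q \<Gamma>"
  shows "dT_per m v P Q \<le>
    (\<Sum>g\<in>#\<Gamma>. \<Sum>i\<in>{-1..int m}. 2 * (side i * cell_dist m v i (left_point g) (right_point g)))"
proof -
  have "dT_per m v P Q \<le>
      (\<Sum>i\<in>{-1..int m}. side i * (\<Sum>g\<in>#\<Gamma>. 2 * of_int (cell_dist m v i (left_point g) (right_point g))))"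
    unfolding dT_per_def
    by (intro sum_mono mult_left_mono cells_level_le[OF assms]) (simp add: less_imp_le side_pos)
  also have "\<dots> = (\<Sum>g\<in>#\<Gamma>. \<Sum>i\<in>{-1..int m}. 2 * (side i * cell_dist m v i (left_point g) (right_point g)))"
    by (simp add: sum_mset_distrib_left sum_sum_mset_swap mult_ac)
  finally show ?thesis .
qed

lemma integral_dT_per_le:
  assumes \<Gamma>: "aug_matching P Q \<Gamma>"
  shows "integral\<^sup>L (shift_measure m) (\<lambda>v. dT_per m v P Q) \<le> 4 * (real m + 2) * matching_cost \<Gamma>"
proof -
  let ?d = "\<lambda>v i g. side i * cell_dist m v i (left_point g) (right_point g)"
  let ?\<delta> = "\<lambda>g. \<bar>fst (left_point g) - fst (right_point g)\<bar> + \<bar>snd (left_point g) - snd (right_point g)\<bar>"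
  have integrable: "integrable (shift_measure m) (\<lambda>v. \<Sum>i\<in>{-1..int m}. 2 * ?d v i g)" for g
    by (intro Bochner_Integration.integrable_sum integrable_mult_right integrable_cell_dist) auto
  have "integral\<^sup>L (shift_measure m) (\<lambda>v. dT_per m v P Q)
      \<le> integral\<^sup>L (shift_measure m) (\<lambda>v. \<Sum>g\<in>#\<Gamma>. \<Sum>i\<in>{-1..int m}. 2 * ?d v i g)"
    by (intro integral_mono' integrable_sum_mset integrable dT_per_le_sum_cell_dist[OF \<Gamma>]
        sum_mset_nonneg sum_nonneg) (simp add: less_imp_le[OF side_pos] cell_dist_def)
  also have "\<dots> = (\<Sum>g\<in>#\<Gamma>. integral\<^sup>L (shift_measure m) (\<lambda>v. \<Sum>i\<in>{-1..int m}. 2 * ?d v i g))"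
    using integrable by (rule integral_sum_mset)
  also have "\<dots> = (\<Sum>g\<in>#\<Gamma>. \<Sum>i\<in>{-1..int m}. 2 * ?\<delta> g)"
    using integrable_cell_dist integral_cell_dist
    by (simp add: Bochner_Integration.integral_sum)
  also have "\<dots> = (\<Sum>g\<in>#\<Gamma>. (real m + 2) * (2 * ?\<delta> g))"
    by (simp add: algebra_simps)
  also have "\<dots> \<le> (\<Sum>g\<in>#\<Gamma>. 4 * (real m + 2) * pair_cost g)"
  proof (intro sum_mset_mono)
    fix g assume "g \<in># \<Gamma>"
    hence "pair_cost g = dist (left_point g) (right_point g)"
      by (intro pair_cost_eq_dist aug_matching_pair_ne[OF \<Gamma>])
    hence "2 * ?\<delta> g \<le> 4 * pair_cost g"
      using abs_diff_fst_add_abs_diff_snd_le[of "left_point g" "right_point g"] by simp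
    hence "(real m + 2) * (2 * ?\<delta> g) \<le> (real m + 2) * (4 * pair_cost g)"
      by (intro mult_left_mono) auto
    thus "(real m + 2) * (2 * ?\<delta> g) \<le> 4 * (real m + 2) * pair_cost g"
      by (simp add: mult_ac)
  qed
  also have "\<dots> = 4 * (real m + 2) * matching_cost \<Gamma>"
    by (simp add: matching_cost_def sum_mset_distrib_left)
  finally show ?thesis .
qed

lemma dT_per_empty: "dT_per m v {#} {#} = 0"
  unfolding dT_per_def by (auto intro!: sum.neutral simp: case_prod_beta)

theorem lemma9:
  shows "\<exists>C'::real. \<forall>(m::nat) (\<Delta>::real) (P::point multiset) (Q::point multiset).
           \<Delta> = 2 ^ m \<and> standing_assms P Q \<Delta> \<longrightarrow>
           integral\<^sup>L (uniform_measure lborel (cbox (0, 0) (\<Delta>, \<Delta>))) (\<lambda>v. dT_per m v P Q)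
             \<le> C' * log 2 \<Delta> * dW P Q"
proof (intro exI[of _ 12] allI impI, elim conjE)
  fix m :: nat and \<Delta> :: real and P Q :: "point multiset"
  assume \<Delta>: "\<Delta> = 2 ^ m" and standing: "standing_assms P Q \<Delta>"
  obtain \<Gamma> where \<Gamma>: "aug_matching P Q \<Gamma>" and dW: "dW P Q = matching_cost \<Gamma>"
    by (rule dW_attained)
  show "integral\<^sup>L (uniform_measure lborel (cbox (0, 0) (\<Delta>, \<Delta>))) (\<lambda>v. dT_per m v P Q)
      \<le> 12 * log 2 \<Delta> * dW P Q"
  proof (cases "m = 0")
    case True
    with standing \<Delta> have "P = {#}" "Q = {#}"
      using standing_assms_unit_square_empty by simp_all
    with True \<Delta> show ?thesis by (simp add: dT_per_empty)
  next
    case False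
    have "integral\<^sup>L (shift_measure m) (\<lambda>v. dT_per m v P Q) \<le> 4 * (real m + 2) * matching_cost \<Gamma>"
      by (rule integral_dT_per_le[OF \<Gamma>])
    also have "\<dots> \<le> 12 * real m * matching_cost \<Gamma>"
      using False matching_cost_nonneg[of \<Gamma>] by (intro mult_right_mono) auto
    finally show ?thesis using \<Delta> dW by simp
  qed
qed

end
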